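(* Let $N>1$ be an integer, let $0<\epsilon<e$, let $\tfrac12<\beta<1$, and let $k$ be an integer with $\beta^kN>1$. Set $K=\lceil \log(e/\epsilon)/\log(\beta/(1-\beta))\rceil$. Then there exist functions $c_1,\dots,c_K:[0,N]\to\mathbb{R}$ and $r_1,\dots,r_K:[\beta^kN,\beta^{k-1}N]\to\mathbb{R}$ such that $g_k(x,y)=\sum_{i=1}^K c_i(x)r_i(y)$ satisfies \[ \left|\Lambda\!\left(\tfrac{x+y}{2}\right)-g_k(x,y)\right|\le\epsilon\qquad\text{for all }(x,y)\in[0,N]\times[\beta^kN,\beta^{k-1}N], \] where $\Lambda(z)=\Gamma(z+1/2)/\Gamma(z+1)$.
   Context: $\Gamma$ denotes the gamma function; $e$ is Euler's number; $\log$ is the natural logarithm. A function of the form $\sum_{i=1}^K c_i(x)r_i(y)$ is said to have rank at most $K$. *)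

theory Defs
  imports "HOL-Analysis.Analysis"
begin

definition Lambda :: "real \<Rightarrow> real" where
  "Lambda z = Gamma (z + 1/2) / Gamma (z + 1)"

end

theory Submission
  imports Defs
begin

text \<open>
  Since Gamma(1/2) = sqrt pi, Lambda(z) = B(z + 1/2, 1/2) / sqrt pi is the integral of
  s^(z - 1/2) (1 - s)^(-1/2) over 0 < s < 1, divided by sqrt pi. With a = beta^k N, w = (x + a)/2
  and h = (y - a)/2, expanding s^h = exp (h ln s) to order K separates the variables: the j-th
  term is an integral depending on x only, times h^j. The Taylor remainder |h ln s|^K / K! is
  absorbed by the factor s^(a/2), because s^A |ln s|^K / K! <= A^(-K); so the error is at most
  (2h/a)^K B(x/2 + 1/2, 1/2) / sqrt pi <= ((1 - beta)/beta)^K sqrt pi, and sqrt pi <= e together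
  with the choice of K makes this at most epsilon.
\<close>

lemma power_div_fact_le_exp:
  fixes x :: real
  assumes "0 \<le> x"
  shows "x ^ n / fact n \<le> exp x"
proof -
  have "x ^ n / fact n \<le> (\<Sum>m\<le>n. x ^ m / fact m)"
    by (rule member_le_sum) (use assms in auto)
  also have "\<dots> \<le> exp x"
    using assms summable_exp_generic[of x]
    by (auto simp: exp_def divide_inverse ac_simps intro!: sum_le_suminf)
  finally show ?thesis .
qed

lemma powr_mult_abs_ln_power_le:
  fixes s A :: real
  assumes "0 < s" "s < 1" "0 < A"
  shows "s powr A * \<bar>ln s\<bar> ^ n / fact n \<le> (1 / A) ^ n"
proof -
  define u where "u = - ln s"
  have u: "u > 0"
    using assms by (simp add: u_def)
  have "(A * u) ^ n / fact n \<le> exp (A * u)"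
    using u assms by (intro power_div_fact_le_exp) simp
  then have bound: "u ^ n / fact n \<le> exp (A * u) / A ^ n"
    using assms by (simp add: power_mult_distrib field_simps)
  have "s powr A * \<bar>ln s\<bar> ^ n / fact n = exp (- (A * u)) * (u ^ n / fact n)"
    using assms by (simp add: u_def powr_def)
  also have "\<dots> \<le> exp (- (A * u)) * (exp (A * u) / A ^ n)"
    by (intro mult_left_mono bound) simp
  also have "\<dots> = (1 / A) ^ n"
    by (simp add: exp_minus power_one_over)
  finally show ?thesis .
qed

lemma exp_Maclaurin_remainder_nonpos:
  fixes v :: real
  assumes "v \<le> 0"
  shows "\<bar>exp v - (\<Sum>m<n. v ^ m / fact m)\<bar> \<le> \<bar>v\<bar> ^ n / fact n"
proof (cases "v = 0 \<or> n = 0")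
  case True
  then show ?thesis
    using assms by (cases n) (auto simp: sum.lessThan_Suc_shift simp del: sum.lessThan_Suc)
next
  case False
  then have "v < 0" "n > 0" using assms by auto
  from Maclaurin_minus[OF this, where diff = "\<lambda>_. exp" and f = exp]
  obtain t where t: "t < 0" "exp v = (\<Sum>m<n. v ^ m / fact m) + exp t / fact n * v ^ n"
    by auto
  have "\<bar>exp v - (\<Sum>m<n. v ^ m / fact m)\<bar> = exp t * (\<bar>v\<bar> ^ n / fact n)"
    using t(2) by (simp add: abs_mult power_abs)
  also have "\<dots> \<le> \<bar>v\<bar> ^ n / fact n"
    using t(1) by (intro mult_left_le_one_le) auto
  finally show ?thesis .
qed

lemma powr_Taylor_remainder_le:
  fixes s A h :: real
  assumes "0 < s" "s < 1" "0 < A" "0 \<le> h"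
  shows "\<bar>s powr (A + h) - s powr A * (\<Sum>j<n. (h * ln s) ^ j / fact j)\<bar> \<le> (h / A) ^ n"
proof -
  have hln: "h * ln s \<le> 0"
    using assms by (simp add: mult_nonneg_nonpos)
  have "\<bar>s powr (A + h) - s powr A * (\<Sum>j<n. (h * ln s) ^ j / fact j)\<bar>
        = \<bar>s powr A * (exp (h * ln s) - (\<Sum>j<n. (h * ln s) ^ j / fact j))\<bar>"
    using assms by (simp add: powr_add powr_def[of s h] right_diff_distrib mult_ac)
  also have "\<dots> = s powr A * \<bar>exp (h * ln s) - (\<Sum>j<n. (h * ln s) ^ j / fact j)\<bar>"
    by (simp add: abs_mult)
  also have "\<dots> \<le> s powr A * (\<bar>h * ln s\<bar> ^ n / fact n)"
    by (intro mult_left_mono exp_Maclaurin_remainder_nonpos hln) simp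
  also have "\<dots> = h ^ n * (s powr A * \<bar>ln s\<bar> ^ n / fact n)"
    by (simp add: abs_mult power_mult_distrib abs_of_nonneg[OF \<open>0 \<le> h\<close>])
  also have "\<dots> \<le> h ^ n * (1 / A) ^ n"
    by (intro mult_left_mono powr_mult_abs_ln_power_le) (use assms in auto)
  finally show ?thesis
    by (simp add: power_divide)
qed

lemma Lambda_eq_Beta: "Lambda z = Beta (z + 1/2) (1/2) / sqrt pi"
  by (simp add: Lambda_def Beta_def Gamma_one_half_real add_ac)

lemma Beta_half_le_pi:
  fixes p :: real
  assumes "1/2 \<le> p"
  shows "Beta p (1/2) \<le> pi"
proof -
  have "Beta p (1/2) \<le> Beta (1/2) (1/2)"
    by (rule Beta_real_mono) (use assms in auto)
  also have "\<dots> = pi"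
    by (simp add: Beta_def Gamma_one_half_real)
  finally show ?thesis .
qed

lemma sqrt_pi_le_exp_1: "sqrt pi \<le> exp 1"
proof -
  have "sqrt pi \<le> sqrt 4"
    using pi_less_4 by (intro real_sqrt_le_mono) simp
  also have "\<dots> \<le> 1 + 1" by simp
  also have "\<dots> \<le> exp (1::real)"
    by (rule exp_ge_add_one_self)
  finally show ?thesis .
qed

lemma power_nat_ceiling_ln_ratio_le:
  fixes t \<delta> :: real
  assumes "0 < t" "t < 1" "0 < \<delta>"
  shows "t ^ nat \<lceil>ln (1 / \<delta>) / ln (1 / t)\<rceil> \<le> \<delta>"
proof -
  define n where "n = nat \<lceil>ln (1 / \<delta>) / ln (1 / t)\<rceil>"
  have M: "ln (1 / t) > 0"
    using assms by simp
  have "real n \<ge> ln (1 / \<delta>) / ln (1 / t)"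
    unfolding n_def by linarith
  then have "ln (1 / \<delta>) \<le> real n * ln (1 / t)"
    using M by (simp add: field_simps)
  then have "real n * ln t \<le> ln \<delta>"
    using assms by (simp add: ln_div)
  then have "exp (real n * ln t) \<le> \<delta>"
    using assms by (metis exp_le_cancel_iff exp_ln)
  moreover have "exp (real n * ln t) = t ^ n"
    using assms by (simp add: exp_of_nat_mult)
  ultimately show ?thesis
    by (simp add: n_def)
qed

text \<open>The Taylor coefficient Lambda^(j)(w) / j!, as the j-fold w-derivative of the Beta integral for Lambda(w).\<close>
definition Lambda_Taylor_coeff :: "real \<Rightarrow> nat \<Rightarrow> real" where
  "Lambda_Taylor_coeff w j =
     integral {0<..<1} (\<lambda>s. s powr (w - 1/2) * (1 - s) powr (-1/2) * ln s ^ j / fact j) / sqrt pi"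

lemma Lambda_Taylor_integrand_integrable:
  fixes w :: real
  assumes "0 < w"
  shows "(\<lambda>s. s powr (w - 1/2) * (1 - s) powr (-1/2) * ln s ^ j / fact j) integrable_on {0<..<1}"
proof -
  define S :: "real set" where "S = {0<..<1}"
  define g where "g s = s powr (w/2 - 1/2) * (1 - s) powr (-1/2)" for s :: real
  define \<phi> where "\<phi> s = s powr (w/2) * ln s ^ j / fact j" for s :: real
  have "(g has_integral Beta (w/2 + 1/2) (1/2)) S"
    using has_integral_Beta_real[of "w/2 + 1/2" "1/2"] assms
    unfolding g_def S_def by (simp add: has_integral_Icc_iff_Ioo)
  then have g: "g absolutely_integrable_on S"
    by (intro nonnegative_absolutely_integrable_1) (auto simp: g_def)
  have "continuous_on S \<phi>"
    unfolding \<phi>_def S_def by (intro continuous_intros) auto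
  then have "\<phi> \<in> borel_measurable (lebesgue_on S)"
    by (rule continuous_imp_measurable_on_sets_lebesgue) (simp add: S_def)
  moreover have "bounded (\<phi> ` S)"
  proof -
    have "\<bar>\<phi> s\<bar> \<le> (1 / (w/2)) ^ j" if "s \<in> S" for s
      using powr_mult_abs_ln_power_le[of s "w/2" j] that assms
      by (simp add: \<phi>_def S_def abs_mult power_abs)
    then show ?thesis
      unfolding bounded_iff by auto
  qed
  ultimately have "(\<lambda>s. \<phi> s * g s) absolutely_integrable_on S"
    by (intro absolutely_integrable_bounded_measurable_product_real g) (simp_all add: S_def)
  then have "(\<lambda>s. \<phi> s * g s) integrable_on S"
    by (rule set_lebesgue_integral_eq_integral(1))
  moreover have "\<phi> s * g s = s powr (w - 1/2) * (1 - s) powr (-1/2) * ln s ^ j / fact j"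
    if "s \<in> S" for s
  proof -
    have "s powr (w - 1/2) = s powr (w/2) * s powr (w/2 - 1/2)"
      using that by (simp add: S_def powr_add[symmetric])
    then show ?thesis
      by (simp add: \<phi>_def g_def)
  qed
  ultimately show ?thesis
    unfolding S_def by (rule integrable_eq)
qed

lemma Beta_integrand_Taylor_remainder_le:
  fixes s A h w :: real
  assumes "0 < s" "s < 1" "0 < A" "0 \<le> h"
  shows "\<bar>s powr (w + h - 1/2) * (1 - s) powr (-1/2)
            - (\<Sum>j<n. h ^ j * (s powr (w - 1/2) * (1 - s) powr (-1/2) * ln s ^ j / fact j))\<bar>
         \<le> (h / A) ^ n * (s powr (w - A - 1/2) * (1 - s) powr (-1/2))"
proof -
  define g where "g = s powr (w - A - 1/2) * (1 - s) powr (-1/2)"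
  have "s powr (w + h - 1/2) = s powr (w - A - 1/2) * s powr (A + h)"
    "s powr (w - 1/2) = s powr (w - A - 1/2) * s powr A"
    using assms by (simp_all add: powr_add[symmetric] algebra_simps)
  then have "s powr (w + h - 1/2) * (1 - s) powr (-1/2)
               - (\<Sum>j<n. h ^ j * (s powr (w - 1/2) * (1 - s) powr (-1/2) * ln s ^ j / fact j))
             = g * (s powr (A + h) - s powr A * (\<Sum>j<n. (h * ln s) ^ j / fact j))"
    by (simp add: g_def sum_distrib_left power_mult_distrib right_diff_distrib mult_ac)
  also have "\<bar>\<dots>\<bar> \<le> g * (h / A) ^ n"
    using powr_Taylor_remainder_le[OF assms, of n]
    by (simp add: abs_mult g_def mult_left_mono)
  finally show ?thesis
    by (simp add: g_def mult.commute)
qed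

lemma Lambda_Taylor_remainder_le:
  fixes w A h :: real
  assumes "0 < A" "A \<le> w" "0 \<le> h"
  shows "\<bar>Lambda (w + h) - (\<Sum>j<n. h ^ j * Lambda_Taylor_coeff w j)\<bar> \<le> (h / A) ^ n * sqrt pi"
proof -
  define S :: "real set" where "S = {0<..<1}"
  define T where "T j s = s powr (w - 1/2) * (1 - s) powr (-1/2) * ln s ^ j / fact j" for j s
  define g where "g s = s powr (w - A - 1/2) * (1 - s) powr (-1/2)" for s :: real
  define D where "D s = s powr (w + h - 1/2) * (1 - s) powr (-1/2) - (\<Sum>j<n. h ^ j * T j s)" for s
  have Beta_integral: "((\<lambda>s. s powr (p - 1/2) * (1 - s) powr (-1/2)) has_integral Beta (p + 1/2) (1/2)) S"
    if "0 \<le> p" for p :: real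
    using has_integral_Beta_real[of "p + 1/2" "1/2"] that
    by (simp add: S_def has_integral_Icc_iff_Ioo)
  have g: "(g has_integral Beta (w - A + 1/2) (1/2)) S"
    using Beta_integral[of "w - A"] assms unfolding g_def by simp
  have "(T j has_integral sqrt pi * Lambda_Taylor_coeff w j) S" for j
  proof -
    have "T j integrable_on S"
      unfolding T_def[abs_def] S_def using assms by (intro Lambda_Taylor_integrand_integrable) simp
    moreover have "sqrt pi * Lambda_Taylor_coeff w j = integral S (T j)"
      unfolding Lambda_Taylor_coeff_def T_def[abs_def] S_def by simp
    ultimately show ?thesis
      by (simp add: integrable_integral)
  qed
  then have "((\<lambda>s. \<Sum>j<n. h ^ j * T j s) has_integral
               (\<Sum>j<n. h ^ j * (sqrt pi * Lambda_Taylor_coeff w j))) S"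
    by (intro has_integral_sum has_integral_mult_right) auto
  then have "((\<lambda>s. \<Sum>j<n. h ^ j * T j s) has_integral
               sqrt pi * (\<Sum>j<n. h ^ j * Lambda_Taylor_coeff w j)) S"
    by (simp add: sum_distrib_left mult.left_commute)
  then have D: "(D has_integral Beta (w + h + 1/2) (1/2) - sqrt pi * (\<Sum>j<n. h ^ j * Lambda_Taylor_coeff w j)) S"
    unfolding D_def using Beta_integral[of "w + h"] assms by (intro has_integral_diff) auto
  have "norm (D s) \<le> (h / A) ^ n * g s" if "s \<in> S" for s
    using Beta_integrand_Taylor_remainder_le[of s A h w n] that assms
    by (simp add: D_def T_def g_def S_def)
  moreover have "((\<lambda>s. (h / A) ^ n * g s) has_integral (h / A) ^ n * Beta (w - A + 1/2) (1/2)) S"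
    using g by (rule has_integral_mult_right)
  ultimately have "norm (integral S D) \<le> integral S (\<lambda>s. (h / A) ^ n * g s)"
    using D by (intro integral_norm_bound_integral) auto
  then have "\<bar>Beta (w + h + 1/2) (1/2) - sqrt pi * (\<Sum>j<n. h ^ j * Lambda_Taylor_coeff w j)\<bar>
               \<le> (h / A) ^ n * Beta (w - A + 1/2) (1/2)"
    using D g by (simp add: integral_unique)
  also have "\<dots> \<le> (h / A) ^ n * pi"
    using assms by (intro mult_left_mono Beta_half_le_pi) auto
  finally have "\<bar>Beta (w + h + 1/2) (1/2) / sqrt pi - (\<Sum>j<n. h ^ j * Lambda_Taylor_coeff w j)\<bar>
                  \<le> (h / A) ^ n * pi / sqrt pi"
    by (simp add: field_simps)
  also have "\<dots> = (h / A) ^ n * sqrt pi"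
    by (simp add: real_div_sqrt flip: times_divide_eq_right)
  finally show ?thesis
    by (simp add: Lambda_eq_Beta add.assoc)
qed

theorem lemma3p4:
  fixes N :: int and \<epsilon> \<beta> :: real and k :: int
  assumes "N > 1"
    and "0 < \<epsilon>" and "\<epsilon> < exp 1"
    and "1/2 < \<beta>" and "\<beta> < 1"
    and "\<beta> powi k * real_of_int N > 1"
  defines "K \<equiv> nat \<lceil>ln (exp 1 / \<epsilon>) / ln (\<beta> / (1 - \<beta>))\<rceil>"
  shows "\<exists>c r :: nat \<Rightarrow> real \<Rightarrow> real.
           \<forall>x \<in> {0 .. real_of_int N}.
           \<forall>y \<in> {\<beta> powi k * real_of_int N .. \<beta> powi (k - 1) * real_of_int N}.
             \<bar>Lambda ((x + y) / 2) - (\<Sum>i = 1..K. c i x * r i y)\<bar> \<le> \<epsilon>"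
proof -
  define a where "a = \<beta> powi k * real_of_int N"
  define t where "t = (1 - \<beta>) / \<beta>"
  have a: "a > 0" and \<beta>: "\<beta> > 0"
    using assms by (simp_all add: a_def)
  have upper: "\<beta> powi (k - 1) * real_of_int N = a / \<beta>"
    using \<beta> by (simp add: a_def power_int_diff)
  have t: "0 < t" "t < 1"
    using assms by (simp_all add: t_def)
  have "K = nat \<lceil>ln (1 / (\<epsilon> / exp 1)) / ln (1 / t)\<rceil>"
    by (simp add: K_def t_def)
  then have "t ^ K \<le> \<epsilon> / exp 1"
    using power_nat_ceiling_ln_ratio_le[of t "\<epsilon> / exp 1"] t assms by simp
  then have "t ^ K * sqrt pi \<le> \<epsilon> / exp 1 * exp 1"
    by (intro mult_mono sqrt_pi_le_exp_1) (use assms in auto)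
  then have error: "t ^ K * sqrt pi \<le> \<epsilon>"
    by simp
  define c where "c i x = Lambda_Taylor_coeff ((x + a) / 2) (i - 1)" for i x
  define r where "r i y = ((y - a) / 2) ^ (i - 1)" for i y
  show ?thesis
  proof (intro exI ballI)
    fix x y
    assume x: "x \<in> {0 .. real_of_int N}"
      and y: "y \<in> {\<beta> powi k * real_of_int N .. \<beta> powi (k - 1) * real_of_int N}"
    define h where "h = (y - a) / 2"
    have "a \<le> y" "y \<le> a / \<beta>"
      using y by (simp_all add: a_def upper)
    then have h: "0 \<le> h" "h / (a / 2) \<le> t"
      using a \<beta> by (simp_all add: h_def t_def field_simps)
    have "\<bar>Lambda ((x + a) / 2 + h) - (\<Sum>j<K. h ^ j * Lambda_Taylor_coeff ((x + a) / 2) j)\<bar>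
            \<le> (h / (a / 2)) ^ K * sqrt pi"
      using x a h by (intro Lambda_Taylor_remainder_le) auto
    also have "\<dots> \<le> t ^ K * sqrt pi"
      using a h by (intro mult_right_mono power_mono) auto
    also have "\<dots> \<le> \<epsilon>"
      by (rule error)
    moreover have "(x + a) / 2 + h = (x + y) / 2"
      by (simp add: h_def field_simps)
    ultimately show "\<bar>Lambda ((x + y) / 2) - (\<Sum>i = 1..K. c i x * r i y)\<bar> \<le> \<epsilon>"
      by (simp add: c_def r_def h_def[symmetric] sum.atLeast1_atMost_eq mult.commute)
  qed
qed

end
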